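(* Let $m,n \in \mathbb{N}$, $S = (s_1,\dots,s_n)^T \in \mathbb{N}^n$ with $s_k \le 2^m$, fix $c \in \mathbb{N}$ and let $N = n^c$. Define $U = (u_1,\dots,u_n)^T$ by $u_k = \left\lfloor N \cdot \frac{s_k}{\|S\|}\right\rfloor$, let $c_a = \frac{\sum_{k=1}^n u_k s_k}{\|U\|\cdot\|S\|}$ (the cosine of the angle between $U$ and $S$) and $d^{\star} = \frac{\sqrt{n}}{2}\sqrt{1-c_a^2}$. Let $Q \in \{0,1\}^n$ satisfy $$U^T\cdot\left(Q - \left(\frac{1}{2}\cdot 1_{n\times 1} + \frac{U}{\|U\|}\cdot d\right)\right) = 0$$ for some $d$ with $-d^{\star} \le d \le d^{\star}$ (equivalently $U^T Q = \frac{U^T 1_{n\times 1}}{2} + d\,\|U\|$). Then $$\left| \frac{S^T \cdot Q}{\frac{S^T \cdot 1_{n\times 1}}{2}} - 1 \right| \le 2\cdot\frac{n}{N}.$$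
   Context: $1_{n\times 1}$ denotes the all-ones vector in $\mathbb{R}^n$ and $\|\cdot\|$ the Euclidean norm. *)

theory Defs
  imports "HOL-Analysis.Analysis"
begin

end

theory Submission
  imports Defs
begin

text \<open>Put \<open>a = N / \<parallel>S\<parallel>\<close>, so that \<open>a S = U + e\<close> with a rounding error \<open>e \<in> [0,1)\<^sup>n\<close>. The hyperplane
  condition on \<open>Q\<close> turns the imbalance into
  \<open>2 S\<bullet>Q - S\<bullet>1 = (2 d \<parallel>U\<parallel> + e\<bullet>(2Q - 1)) / a\<close>. Both summands are at most \<open>n\<close> in absolute
  value: the second because \<open>2Q - 1 \<in> {-1,1}\<^sup>n\<close>, the first because
  \<open>\<parallel>U\<parallel> sqrt (1 - c\<^sub>a\<^sup>2)\<close> is the distance from \<open>U\<close> to the line through \<open>S\<close>, hence at most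
  \<open>\<parallel>e\<parallel> \<le> sqrt n\<close>. Dividing by \<open>S\<bullet>1 \<ge> \<parallel>S\<parallel>\<close> gives the claim.\<close>

lemma norm_le_inner_ones_cart:
  fixes x :: "real ^ 'n"
  assumes "\<forall>k. 0 \<le> x $ k"
  shows "norm x \<le> x \<bullet> (\<chi> k. 1)"
  using norm_le_l1_cart[of x] assms by (simp add: inner_vec_def)

lemma abs_inner_le_CARD:
  fixes x y :: "real ^ 'n"
  assumes "\<forall>k. \<bar>x $ k\<bar> \<le> 1" and "\<forall>k. \<bar>y $ k\<bar> \<le> 1"
  shows "\<bar>x \<bullet> y\<bar> \<le> real CARD('n)"
proof -
  have "\<bar>x \<bullet> y\<bar> \<le> (\<Sum>k\<in>UNIV. \<bar>x $ k\<bar> * \<bar>y $ k\<bar>)"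
    unfolding inner_vec_def abs_mult[symmetric] inner_real_def by (rule sum_abs)
  also have "\<dots> \<le> (\<Sum>k\<in>(UNIV :: 'n set). 1)"
    using assms by (intro sum_mono) (simp add: mult_le_one)
  finally show ?thesis by simp
qed

text \<open>The left-hand side is the squared distance from \<open>u\<close> to the line through \<open>s\<close>.\<close>

lemma norm_sq_mult_sin_sq_le:
  fixes u s :: "'a :: real_inner"
  shows "(norm u)\<^sup>2 * (1 - ((u \<bullet> s) / (norm u * norm s))\<^sup>2) \<le> (norm (t *\<^sub>R s - u))\<^sup>2"
proof -
  have "(norm u)\<^sup>2 * (1 - ((u \<bullet> s) / (norm u * norm s))\<^sup>2) = (norm u)\<^sup>2 - (u \<bullet> s)\<^sup>2 / (norm s)\<^sup>2"
    by (cases "u = 0") (simp_all add: field_simps power2_eq_square)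
  also have "\<dots> \<le> (norm u)\<^sup>2 - (u \<bullet> s)\<^sup>2 / (norm s)\<^sup>2 + (t * norm s - (u \<bullet> s) / norm s)\<^sup>2"
    by simp
  also have "\<dots> = (norm u)\<^sup>2 - 2 * t * (u \<bullet> s) + t\<^sup>2 * (norm s)\<^sup>2"
    by (cases "s = 0") (simp_all add: field_simps power2_eq_square)
  also have "\<dots> = (norm (t *\<^sub>R s - u))\<^sup>2"
    unfolding power2_norm_eq_inner
    by (simp add: inner_diff_left inner_diff_right inner_commute power2_eq_square)
  finally show ?thesis .
qed

lemma inner_eq_of_hyperplane:
  fixes u q w :: "'a :: real_inner"
  assumes "u \<bullet> (q - ((1/2) *\<^sub>R w + (d / norm u) *\<^sub>R u)) = 0"
  shows "u \<bullet> q = u \<bullet> w / 2 + d * norm u"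
  using assms
  by (cases "u = 0") (simp_all add: inner_diff_right inner_add_right dot_square_norm power2_eq_square)

lemma abs_twice_mult_le_of_sin_bound:
  fixes d r c n :: real
  assumes "\<bar>d\<bar> \<le> sqrt n / 2 * sqrt (1 - c\<^sup>2)" and "r\<^sup>2 * (1 - c\<^sup>2) \<le> n"
    and "0 \<le> r" and "0 \<le> n"
  shows "\<bar>2 * d * r\<bar> \<le> n"
proof -
  have "\<bar>d\<bar> * r \<le> sqrt n / 2 * sqrt (1 - c\<^sup>2) * r"
    using assms(1,3) by (rule mult_right_mono)
  also have "\<dots> = sqrt n / 2 * sqrt (r\<^sup>2 * (1 - c\<^sup>2))"
    using assms(3) by (simp add: real_sqrt_mult)
  also have "\<dots> \<le> sqrt n / 2 * sqrt n"
    using assms(2,4) by (intro mult_left_mono real_sqrt_le_mono) auto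
  also have "\<dots> = n / 2" using assms(4) by simp
  finally show ?thesis using assms(3) by (simp add: abs_mult)
qed

lemma twice_inner_minus_inner_eq:
  fixes s u e q w :: "'a :: real_inner"
  assumes "e = a *\<^sub>R s - u" and "a \<noteq> 0" and "u \<bullet> q = u \<bullet> w / 2 + \<delta>"
  shows "2 * (s \<bullet> q) - s \<bullet> w = (2 * \<delta> + e \<bullet> (2 *\<^sub>R q - w)) / a"
  using assms(2,3) unfolding assms(1) by (simp add: field_simps inner_diff_left inner_diff_right)

lemma abs_div_half_minus_one_le:
  fixes x t b :: real
  assumes "\<bar>2 * x - t\<bar> \<le> b" and "0 < t"
  shows "\<bar>x / (t / 2) - 1\<bar> \<le> b / t"
proof -
  have "x / (t / 2) - 1 = (2 * x - t) / t" using assms(2) by (simp add: field_simps)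
  then show ?thesis using assms by (simp add: divide_right_mono)
qed

theorem theorem2p3:
  fixes m c N :: nat
    and S U Q :: "real ^ 'n"
    and ca dstar d :: real
  assumes S_nat: "\<forall>k. S $ k \<in> \<nat>"
    and S_bound: "\<forall>k. S $ k \<le> 2 ^ m"
    and S_nonzero: "S \<noteq> 0"
    and N_def: "N = CARD('n) ^ c"
    and U_def: "U = (\<chi> k. of_int \<lfloor>real N * (S $ k / norm S)\<rfloor>)"
    and ca_def: "ca = (U \<bullet> S) / (norm U * norm S)"
    and dstar_def: "dstar = sqrt (real CARD('n)) / 2 * sqrt (1 - ca\<^sup>2)"
    and Q_01: "\<forall>k. Q $ k \<in> {0, 1}"
    and d_range: "- dstar \<le> d" "d \<le> dstar"
    and Q_eq: "U \<bullet> (Q - ((1/2) *\<^sub>R (\<chi> k. 1) + (d / norm U) *\<^sub>R U)) = 0"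
  shows "\<bar>(S \<bullet> Q) / ((S \<bullet> (\<chi> k. 1)) / 2) - 1\<bar> \<le> 2 * real CARD('n) / real N"
proof -
  let ?n = "real CARD('n)" and ?one = "(\<chi> k. 1) :: real ^ 'n"
  define a where "a = real N / norm S"
  define e where "e = a *\<^sub>R S - U"
  have a_pos: "a > 0" using S_nonzero by (simp add: a_def N_def)
  have e_bound: "\<forall>k. \<bar>e $ k\<bar> \<le> 1"
    by (simp add: e_def U_def a_def) linarith
  have "(norm U)\<^sup>2 * (1 - ca\<^sup>2) \<le> ?n"
    using norm_sq_mult_sin_sq_le[of U S a] abs_inner_le_CARD[OF e_bound e_bound]
    by (simp add: ca_def e_def power2_norm_eq_inner)
  with d_range have d_term: "\<bar>2 * d * norm U\<bar> \<le> ?n"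
    by (intro abs_twice_mult_le_of_sin_bound[where c = ca]) (auto simp: dstar_def)
  have e_term: "\<bar>e \<bullet> (2 *\<^sub>R Q - ?one)\<bar> \<le> ?n"
  proof (intro abs_inner_le_CARD[OF e_bound] allI)
    fix k show "\<bar>(2 *\<^sub>R Q - ?one) $ k\<bar> \<le> 1" using Q_01[rule_format, of k] by auto
  qed
  have "2 * (S \<bullet> Q) - S \<bullet> ?one = (2 * (d * norm U) + e \<bullet> (2 *\<^sub>R Q - ?one)) / a"
    using a_pos by (intro twice_inner_minus_inner_eq[OF e_def _ inner_eq_of_hyperplane[OF Q_eq]]) simp
  then have imbalance: "\<bar>2 * (S \<bullet> Q) - S \<bullet> ?one\<bar> \<le> 2 * ?n / a"
    using a_pos d_term e_term by (simp add: divide_right_mono)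
  have norm_le: "norm S \<le> S \<bullet> ?one"
    using S_nat by (intro norm_le_inner_ones_cart) (metis Nats_cases of_nat_0_le_iff)
  with S_nonzero have sum_pos: "S \<bullet> ?one > 0"
    by (meson less_le_trans zero_less_norm_iff)
  have "\<bar>(S \<bullet> Q) / (S \<bullet> ?one / 2) - 1\<bar> \<le> 2 * ?n / a / (S \<bullet> ?one)"
    by (rule abs_div_half_minus_one_le[OF imbalance sum_pos])
  also have "\<dots> = 2 * ?n / real N * (norm S / (S \<bullet> ?one))"
    by (simp add: a_def)
  also have "\<dots> \<le> 2 * ?n / real N"
    using norm_le sum_pos by (intro mult_left_le) simp_all
  finally show ?thesis .
qed

end
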